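(* Assume $f$ has a unique global maximizer, contains no weak epistasis, and every order-1 epistasis of $f$ is strict. If the maximum in-degree of the epistatic graph is $k$, then every strongly connected component of the epistatic graph has size at most $k+1$, and consequently the decomposition difficulty is at most $k+1$.
   Context: Fix $\ell\ge1$, loci $V=\{0,\dots,\ell-1\}$, chromosomes $\vec y\in\{0,1\}^V$, fitness $f:\{0,1\}^V\to\mathbb R$ (maximized) with unique global maximizer $g$. An assignment $A$ is a set of pairs $(v,a)$ with at most one pair per locus; coverage $\mathcal C(A)$; $A[v]$ its allele at $v$. $\Psi_A$ is the set of chromosomes agreeing with $A$ on $\mathcal C(A)$ with maximum fitness among such chromosomes; $\Psi_A[v]=\{\psi_v:\psi\in\Psi_A\}$. Epistasis: for $v\in V$ and nonempty $S\subseteq V\setminus\{v\}$, $S\Rightarrow v$ iff for every $s\in S$ there exists an assignment $A$ with $\mathcal C(A)=S$ and $\Psi_A[v]\neq\Psi_{A\setminus\{(s,A[s])\}}[v]$. An epistasis $S\Rightarrow v$ with $|S|\ge2$ is weak if no nonempty proper subset $T\subsetneq S$ has $T\Rightarrow v$. An order-1 epistasis $\{u\}\Rightarrow v$ is strict if $\Psi_{\{(u,1-g[u])\}}[v]=\{1-g[v]\}$. The epistatic graph (EG) is the directed graph on $V$ with edge $u\to v$ iff $\{u\}\Rightarrow v$. The decomposition difficulty is $\max(k_{SCC},k_{in}+1)$, where $k_{SCC}$ is the maximum size of a strongly connected component of the EG and $k_{in}$ its maximum in-degree. *)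

theory Defs
  imports Complex_Main
begin

text \<open>Loci are V = {0..<l}. A chromosome is a function nat => nat with values in {0,1}
  on V and value 0 outside V (so chromosomes correspond bijectively to {0,1}^V).\<close>

definition chroms :: "nat \<Rightarrow> (nat \<Rightarrow> nat) set" where
  "chroms l = {y. (\<forall>i<l. y i \<in> {0,1}) \<and> (\<forall>i\<ge>l. y i = 0)}"

definition assignment :: "nat \<Rightarrow> (nat \<times> nat) set \<Rightarrow> bool" where
  "assignment l A \<longleftrightarrow> A \<subseteq> {0..<l} \<times> {0,1} \<and>
     (\<forall>v a b. (v,a) \<in> A \<longrightarrow> (v,b) \<in> A \<longrightarrow> a = b)"

definition coverage :: "(nat \<times> nat) set \<Rightarrow> nat set" where
  "coverage A = fst ` A"

definition alleleOf :: "(nat \<times> nat) set \<Rightarrow> nat \<Rightarrow> nat" where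
  "alleleOf A v = (THE a. (v,a) \<in> A)"

definition agrees :: "(nat \<Rightarrow> nat) \<Rightarrow> (nat \<times> nat) set \<Rightarrow> bool" where
  "agrees y A \<longleftrightarrow> (\<forall>(v,a)\<in>A. y v = a)"

definition Psi :: "nat \<Rightarrow> ((nat \<Rightarrow> nat) \<Rightarrow> real) \<Rightarrow> (nat \<times> nat) set \<Rightarrow> (nat \<Rightarrow> nat) set" where
  "Psi l f A = {y \<in> chroms l. agrees y A \<and> (\<forall>z \<in> chroms l. agrees z A \<longrightarrow> f z \<le> f y)}"

definition PsiAt :: "nat \<Rightarrow> ((nat \<Rightarrow> nat) \<Rightarrow> real) \<Rightarrow> (nat \<times> nat) set \<Rightarrow> nat \<Rightarrow> nat set" where
  "PsiAt l f A v = (\<lambda>y. y v) ` Psi l f A"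

definition epistasis :: "nat \<Rightarrow> ((nat \<Rightarrow> nat) \<Rightarrow> real) \<Rightarrow> nat set \<Rightarrow> nat \<Rightarrow> bool" where
  "epistasis l f S v \<longleftrightarrow> v < l \<and> S \<noteq> {} \<and> S \<subseteq> {0..<l} - {v} \<and>
     (\<forall>s\<in>S. \<exists>A. assignment l A \<and> coverage A = S \<and>
        PsiAt l f A v \<noteq> PsiAt l f (A - {(s, alleleOf A s)}) v)"

definition weak_epistasis :: "nat \<Rightarrow> ((nat \<Rightarrow> nat) \<Rightarrow> real) \<Rightarrow> nat set \<Rightarrow> nat \<Rightarrow> bool" where
  "weak_epistasis l f S v \<longleftrightarrow> epistasis l f S v \<and> card S \<ge> 2 \<and>
     \<not> (\<exists>T. T \<noteq> {} \<and> T \<subset> S \<and> epistasis l f T v)"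

definition strict_epistasis ::
  "nat \<Rightarrow> ((nat \<Rightarrow> nat) \<Rightarrow> real) \<Rightarrow> (nat \<Rightarrow> nat) \<Rightarrow> nat \<Rightarrow> nat \<Rightarrow> bool" where
  "strict_epistasis l f g u v \<longleftrightarrow> epistasis l f {u} v \<and>
     PsiAt l f {(u, 1 - g u)} v = {1 - g v}"

definition unique_global_max :: "nat \<Rightarrow> ((nat \<Rightarrow> nat) \<Rightarrow> real) \<Rightarrow> (nat \<Rightarrow> nat) \<Rightarrow> bool" where
  "unique_global_max l f g \<longleftrightarrow> g \<in> chroms l \<and> (\<forall>y\<in>chroms l. y \<noteq> g \<longrightarrow> f y < f g)"

definition EG :: "nat \<Rightarrow> ((nat \<Rightarrow> nat) \<Rightarrow> real) \<Rightarrow> (nat \<times> nat) set" where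
  "EG l f = {(u,v). u < l \<and> v < l \<and> epistasis l f {u} v}"

definition scc_of :: "nat \<Rightarrow> ((nat \<Rightarrow> nat) \<Rightarrow> real) \<Rightarrow> nat \<Rightarrow> nat set" where
  "scc_of l f u = {w. w < l \<and> (u,w) \<in> (EG l f)\<^sup>* \<and> (w,u) \<in> (EG l f)\<^sup>*}"

definition in_degree :: "nat \<Rightarrow> ((nat \<Rightarrow> nat) \<Rightarrow> real) \<Rightarrow> nat \<Rightarrow> nat" where
  "in_degree l f v = card {u. (u,v) \<in> EG l f}"

definition k_in :: "nat \<Rightarrow> ((nat \<Rightarrow> nat) \<Rightarrow> real) \<Rightarrow> nat" where
  "k_in l f = Max (in_degree l f ` {0..<l})"

definition k_SCC :: "nat \<Rightarrow> ((nat \<Rightarrow> nat) \<Rightarrow> real) \<Rightarrow> nat" where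
  "k_SCC l f = Max ((\<lambda>u. card (scc_of l f u)) ` {0..<l})"

definition decomposition_difficulty :: "nat \<Rightarrow> ((nat \<Rightarrow> nat) \<Rightarrow> real) \<Rightarrow> nat" where
  "decomposition_difficulty l f = max (k_SCC l f) (k_in l f + 1)"

end

theory Submission
  imports Defs
begin

text \<open>Write \<open>P u\<close> for the optimal chromosomes among those with locus \<open>u\<close> flipped away from the
  global maximizer \<open>g\<close>. A strict edge \<open>u \<rightarrow> v\<close> says that every element of \<open>P u\<close> also has \<open>v\<close>
  flipped, so the fitness level of \<open>P u\<close> is at most that of \<open>P v\<close>. Around a cycle all levels
  coincide, hence \<open>P x \<subseteq> P y\<close> for any two loci \<open>x, y\<close> of one strongly connected component;
  so \<open>P x\<close> forces locus \<open>y\<close> to \<open>1 - g y\<close>, whereas the empty assignment forces \<open>g y\<close>, and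
  \<open>{x} \<Rightarrow> y\<close> follows. Every strongly connected component is therefore a complete subgraph,
  and it lies within a vertex together with its in-neighbours.\<close>

lemma Psi_empty_unique_max:
  assumes "unique_global_max l f g"
  shows "Psi l f {} = {g}"
proof -
  have g: "g \<in> chroms l" and lt: "\<forall>y\<in>chroms l. y \<noteq> g \<longrightarrow> f y < f g"
    using assms unfolding unique_global_max_def by auto
  have "y \<in> Psi l f {} \<longleftrightarrow> y = g" for y
  proof
    assume "y \<in> Psi l f {}"
    then have "y \<in> chroms l" "f g \<le> f y" using g unfolding Psi_def agrees_def by auto
    then show "y = g" using lt by force
  next
    assume "y = g"
    then show "y \<in> Psi l f {}"
      using g lt unfolding Psi_def agrees_def by (auto simp: less_eq_real_def)
  qed
  then show ?thesis by blast
qed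

lemma Psi_le:
  assumes "\<chi> \<in> chroms l" "agrees \<chi> B" "\<phi> \<in> Psi l f B"
  shows "f \<chi> \<le> f \<phi>"
  using assms unfolding Psi_def by auto

lemma Psi_if_ge:
  assumes "\<chi> \<in> chroms l" "agrees \<chi> B" "\<phi> \<in> Psi l f B" "f \<phi> \<le> f \<chi>"
  shows "\<chi> \<in> Psi l f B"
  using assms unfolding Psi_def by force

lemma epistasis_singletonI:
  assumes "x < l" "y < l" "x \<noteq> y" "a \<in> {0,1}"
    and "PsiAt l f {(x, a)} y \<noteq> PsiAt l f {} y"
  shows "epistasis l f {x} y"
proof -
  have "assignment l {(x, a)}" using assms(1,4) unfolding assignment_def by auto
  moreover have "coverage {(x, a)} = {x}" unfolding coverage_def by auto
  moreover have "alleleOf {(x, a)} x = a" unfolding alleleOf_def by auto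
  ultimately show ?thesis
    using assms unfolding epistasis_def by (auto intro!: exI[of _ "{(x, a)}"])
qed

locale strict_order1_epistasis =
  fixes l :: nat and f :: "(nat \<Rightarrow> nat) \<Rightarrow> real" and g :: "nat \<Rightarrow> nat"
  assumes unique_max: "unique_global_max l f g"
    and strict: "\<And>u v. epistasis l f {u} v \<Longrightarrow> strict_epistasis l f g u v"
begin

abbreviation flip :: "nat \<Rightarrow> (nat \<times> nat) set" where
  "flip u \<equiv> {(u, 1 - g u)}"

abbreviation P :: "nat \<Rightarrow> (nat \<Rightarrow> nat) set" where
  "P u \<equiv> Psi l f (flip u)"

lemma edge_PsiAt_flip:
  assumes "(u, v) \<in> EG l f"
  shows "PsiAt l f (flip u) v = {1 - g v}"
  using assms strict unfolding EG_def strict_epistasis_def by auto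

lemma edge_P_nonempty:
  assumes "(u, v) \<in> EG l f"
  shows "P u \<noteq> {}"
  using edge_PsiAt_flip[OF assms] unfolding PsiAt_def by auto

lemma edge_P_agrees_flip:
  assumes "(u, v) \<in> EG l f" "\<psi> \<in> P u"
  shows "agrees \<psi> (flip v)"
  using edge_PsiAt_flip[OF assms(1)] assms(2) unfolding PsiAt_def agrees_def by auto

lemma trancl_P_nonempty:
  assumes "(u, v) \<in> (EG l f)\<^sup>+"
  shows "P u \<noteq> {}"
  using assms edge_P_nonempty by (meson tranclD)

lemma P_subset_chroms: "P u \<subseteq> chroms l"
  unfolding Psi_def by auto

lemma trancl_P_level_le:
  assumes "(a, b) \<in> (EG l f)\<^sup>+" "\<psi> \<in> P a" "\<phi> \<in> P b"
  shows "f \<psi> \<le> f \<phi>"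
  using assms
proof (induction arbitrary: \<phi> rule: trancl_induct)
  case (base b)
  then show ?case using Psi_le edge_P_agrees_flip P_subset_chroms by blast
next
  case (step c b)
  obtain \<chi> where \<chi>: "\<chi> \<in> P c" using edge_P_nonempty[OF step.hyps(2)] by blast
  have "f \<psi> \<le> f \<chi>" using step.IH[OF step.prems(1) \<chi>] .
  also have "f \<chi> \<le> f \<phi>"
    using Psi_le edge_P_agrees_flip[OF step.hyps(2) \<chi>] P_subset_chroms \<chi> step.prems(2) by blast
  finally show ?case .
qed

lemma cycle_P_subset:
  assumes "(x, a) \<in> (EG l f)\<^sup>+" "(a, x) \<in> (EG l f)\<^sup>+"
  shows "P x \<subseteq> P a"
  using assms
proof (induction rule: trancl_induct)
  case (base a)
  show ?case
  proof
    fix \<psi> assume \<psi>: "\<psi> \<in> P x"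
    obtain \<phi> where \<phi>: "\<phi> \<in> P a" using trancl_P_nonempty[OF base(2)] by blast
    have "f \<phi> \<le> f \<psi>" using trancl_P_level_le[OF base(2) \<phi> \<psi>] .
    then show "\<psi> \<in> P a"
      using Psi_if_ge edge_P_agrees_flip[OF base(1) \<psi>] P_subset_chroms \<psi> \<phi> by blast
  qed
next
  case (step c a)
  show ?case
  proof
    fix \<psi> assume \<psi>: "\<psi> \<in> P x"
    have "(c, x) \<in> (EG l f)\<^sup>+" using step.hyps(2) step.prems by simp
    then have "\<psi> \<in> P c" using step.IH \<psi> by blast
    obtain \<phi> where \<phi>: "\<phi> \<in> P a" using trancl_P_nonempty[OF step.prems] by blast
    have "f \<phi> \<le> f \<psi>" using trancl_P_level_le[OF step.prems \<phi> \<psi>] .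
    then show "\<psi> \<in> P a"
      using Psi_if_ge edge_P_agrees_flip[OF step.hyps(2) \<open>\<psi> \<in> P c\<close>] P_subset_chroms \<psi> \<phi>
      by blast
  qed
qed

lemma mutually_reachable_edge:
  assumes "x < l" "y < l" "x \<noteq> y"
    and "(x, y) \<in> (EG l f)\<^sup>*" "(y, x) \<in> (EG l f)\<^sup>*"
  shows "(x, y) \<in> EG l f"
proof -
  have xy: "(x, y) \<in> (EG l f)\<^sup>+" and yx: "(y, x) \<in> (EG l f)\<^sup>+"
    using assms(3-5) by (auto simp: rtrancl_eq_or_trancl)
  have "P x \<noteq> {}" using trancl_P_nonempty[OF xy] .
  moreover have "\<psi> y = 1 - g y" if "\<psi> \<in> P x" for \<psi>
    using cycle_P_subset[OF xy yx] that unfolding Psi_def agrees_def by auto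
  ultimately have "PsiAt l f (flip x) y = {1 - g y}" unfolding PsiAt_def by auto
  moreover have "PsiAt l f {} y = {g y}"
    using Psi_empty_unique_max[OF unique_max] unfolding PsiAt_def by auto
  moreover have "g x \<in> {0,1}" "g y \<in> {0,1}"
    using unique_max assms(1,2) unfolding unique_global_max_def chroms_def by auto
  ultimately have "epistasis l f {x} y"
    using epistasis_singletonI[OF assms(1-3), of "1 - g x"] by auto
  then show ?thesis unfolding EG_def using assms(1,2) by auto
qed

lemma card_scc_le_in_degree:
  assumes "u < l"
  shows "card (scc_of l f u) \<le> in_degree l f u + 1"
proof -
  let ?In = "{w. (w, u) \<in> EG l f}"
  have fin: "finite ?In" by (rule finite_subset[of _ "{0..<l}"]) (auto simp: EG_def)
  have "scc_of l f u \<subseteq> insert u ?In"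
    using mutually_reachable_edge assms unfolding scc_of_def by auto
  then have "card (scc_of l f u) \<le> card (insert u ?In)" using fin by (intro card_mono) auto
  also have "\<dots> \<le> card ?In + 1" using fin by (simp add: card_insert_if)
  finally show ?thesis unfolding in_degree_def .
qed

end

theorem theorem8:
  fixes l :: nat and f :: "(nat \<Rightarrow> nat) \<Rightarrow> real" and g :: "nat \<Rightarrow> nat" and k :: nat
  assumes "l \<ge> 1"
    and "unique_global_max l f g"
    and "\<forall>S v. \<not> weak_epistasis l f S v"
    and "\<forall>u v. epistasis l f {u} v \<longrightarrow> strict_epistasis l f g u v"
    and "k_in l f = k"
  shows "(\<forall>u<l. card (scc_of l f u) \<le> k + 1) \<and> decomposition_difficulty l f \<le> k + 1"
proof -
  interpret strict_order1_epistasis l f g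
    using assms(2,4) by unfold_locales auto
  have scc: "\<forall>u<l. card (scc_of l f u) \<le> k + 1"
  proof (intro allI impI)
    fix u assume "u < l"
    then have "in_degree l f u \<le> k_in l f" unfolding k_in_def by (intro Max_ge) auto
    then show "card (scc_of l f u) \<le> k + 1"
      using card_scc_le_in_degree[OF \<open>u < l\<close>] assms(5) by simp
  qed
  then have "k_SCC l f \<le> k + 1" unfolding k_SCC_def using assms(1) by (subst Max_le_iff) auto
  then show ?thesis using scc assms(5) unfolding decomposition_difficulty_def by simp
qed

end
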